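(* Let $M$ be a Riemannian manifold. Let $e_1,e_2$ be paths in $M$ from $p_1$ to $p_2$ of lengths $l_1,l_2$. Suppose the loop $\alpha=e_1*\bar e_2$ based at $p_1$ can be contracted to $p_1$ through loops $\alpha_\tau$ based at $p_1$ of length at most $l_3$. Then $e_1$ is path-homotopic to $e_2$ through curves of length at most $\min\{l_1,l_2\}+l_3$. Moreover (parametric version): let $X$ be a manifold and $\{e_1^x\}_{x\in X}$, $\{e_2^x\}_{x\in X}$ continuous families of paths from $p_1(x)$ to $p_2(x)$ of lengths $l_1(x),l_2(x)$, and suppose there is a continuous family of contractions of the loops $e_1^x*\bar e_2^x$ through loops based at $p_1(x)$ of length at most $l_3(x)$. Then there is a continuous family of path homotopies from $e_1^x$ to $e_2^x$ through curves of length at most $\min_{i=1,2}\max_{x\in X}(l_i(x)+l_3(x))$.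
   Context: $*$ denotes concatenation of paths and $\bar\beta$ denotes the path $\beta$ traversed in the opposite direction. A path homotopy fixes endpoints. *)

theory Defs
  imports "HOL-Analysis.Analysis"
begin

text \<open>For a Riemannian manifold with its Riemannian distance this is the Riemannian length.\<close>
definition curve_length :: "(real \<Rightarrow> 'a::metric_space) \<Rightarrow> ereal" where
  "curve_length g =
     (SUP ts \<in> {ts. sorted ts \<and> set ts \<subseteq> {0..1}}.
        ereal (\<Sum>i < length ts - 1. dist (g (ts ! i)) (g (ts ! Suc i))))"

end

theory Submission
  imports Defs
begin

text \<open>Let H be the given contraction of the loop e1 +++ reversepath e2. The homotopy is H
  precomposed with a fixed continuous self-map of the square, chosen once and for all, so that
  the construction is automatically continuous in any parameters. Every curve of the homotopy
  runs along part of one loop H(\<tau>, -), waits at the base point, and then runs monotonically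
  along part of e2; hence its length is at most l3 + l2. Applying the same construction to the
  reversed loops, with the roles of e1 and e2 exchanged, gives the bound l1 + l3.\<close>

section \<open>Variation of a curve on an interval\<close>

fun chord_length :: "(real \<Rightarrow> 'a::metric_space) \<Rightarrow> real list \<Rightarrow> real" where
  "chord_length g (x # y # ts) = dist (g x) (g y) + chord_length g (y # ts)"
| "chord_length g _ = 0"

definition variation :: "(real \<Rightarrow> 'a::metric_space) \<Rightarrow> real \<Rightarrow> real \<Rightarrow> ereal" where
  "variation g a b =
     (SUP ts \<in> {ts. sorted ts \<and> set ts \<subseteq> {a..b}}. ereal (chord_length g ts))"

lemma sum_dist_eq_chord_length:
  "(\<Sum>i < length ts - 1. dist (g (ts ! i)) (g (ts ! Suc i))) = chord_length g ts"
  by (induction g ts rule: chord_length.induct)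
    (simp_all add: sum.lessThan_Suc_shift del: sum.lessThan_Suc)

lemma curve_length_eq_variation: "curve_length g = variation g 0 1"
  unfolding curve_length_def variation_def sum_dist_eq_chord_length ..

lemma chord_length_le_variation:
  "sorted ts \<Longrightarrow> set ts \<subseteq> {a..b} \<Longrightarrow> ereal (chord_length g ts) \<le> variation g a b"
  unfolding variation_def by (rule SUP_upper) auto

lemma variation_leI:
  "(\<And>ts. sorted ts \<Longrightarrow> set ts \<subseteq> {a..b} \<Longrightarrow> ereal (chord_length g ts) \<le> M) \<Longrightarrow>
    variation g a b \<le> M"
  unfolding variation_def by (rule SUP_least) auto

lemma variation_nonneg: "0 \<le> variation g a b"
  using chord_length_le_variation[of "[]" a b g] by (simp add: zero_ereal_def)

lemma chord_length_cong: "(\<And>t. t \<in> set ts \<Longrightarrow> f t = g t) \<Longrightarrow> chord_length f ts = chord_length g ts"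
  by (induction f ts rule: chord_length.induct) auto

lemma chord_length_map: "chord_length f (map g ts) = chord_length (f \<circ> g) ts"
  by (induction ts rule: induct_list012) auto

lemma chord_length_snoc2:
  "chord_length f (ts @ [a, b]) = chord_length f (ts @ [a]) + dist (f a) (f b)"
  by (induction ts rule: induct_list012) auto

lemma chord_length_rev: "chord_length f (rev ts) = chord_length f ts"
  by (induction ts rule: induct_list012) (auto simp: chord_length_snoc2 dist_commute)

lemma chord_length_append_le:
  "chord_length f (xs @ ys) \<le> chord_length f (xs @ [b]) + chord_length f (b # ys)"
proof (induction xs rule: induct_list012)
  case 1
  then show ?case by (cases ys) auto
next
  case (2 x)
  then show ?case by (cases ys) (auto intro: dist_triangle)
qed simp

lemma chord_length_const: "(\<And>t. t \<in> set ts \<Longrightarrow> f t = c) \<Longrightarrow> chord_length f ts = 0"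
  by (induction f ts rule: chord_length.induct) auto

lemma variation_const:
  assumes "\<And>t. t \<in> {a..b} \<Longrightarrow> f t = c"
  shows "variation f a b = 0"
proof (rule antisym[OF variation_leI variation_nonneg])
  fix ts assume "set ts \<subseteq> {a..b}"
  then show "ereal (chord_length f ts) \<le> 0"
    using assms by (subst chord_length_const[of _ f c]) auto
qed

lemma sorted_dropWhile_gt:
  "sorted ts \<Longrightarrow> y \<in> set (dropWhile (\<lambda>t. t \<le> b) ts) \<Longrightarrow> b < (y::real)"
  by (induction ts) (auto split: if_splits)

lemma variation_split_le:
  assumes "a \<le> b" "b \<le> c"
  shows "variation f a c \<le> variation f a b + variation f b c"
proof (rule variation_leI)
  fix ts :: "real list" assume ts: "sorted ts" "set ts \<subseteq> {a..c}"
  define xs where "xs = takeWhile (\<lambda>t. t \<le> b) ts"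
  define ys where "ys = dropWhile (\<lambda>t. t \<le> b) ts"
  have ts_eq: "ts = xs @ ys" by (simp add: xs_def ys_def)
  have xs_le: "\<forall>x\<in>set xs. x \<le> b" unfolding xs_def by (auto dest: set_takeWhileD)
  have ys_gt: "\<forall>y\<in>set ys. b < y"
    unfolding ys_def using sorted_dropWhile_gt[OF ts(1)] by blast
  have sorted: "sorted xs" "sorted ys" using ts(1) ts_eq sorted_append by metis+
  have "sorted (xs @ [b])" using sorted(1) xs_le by (simp add: sorted_append)
  moreover have "set (xs @ [b]) \<subseteq> {a..b}" using ts(2) xs_le assms unfolding ts_eq by auto
  ultimately have left: "ereal (chord_length f (xs @ [b])) \<le> variation f a b"
    by (rule chord_length_le_variation)
  have "sorted (b # ys)" using sorted(2) ys_gt by (simp add: less_imp_le)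
  moreover have "set (b # ys) \<subseteq> {b..c}" using ts(2) ys_gt assms unfolding ts_eq by force
  ultimately have right: "ereal (chord_length f (b # ys)) \<le> variation f b c"
    by (rule chord_length_le_variation)
  have "ereal (chord_length f ts) \<le> ereal (chord_length f (xs @ [b])) + ereal (chord_length f (b # ys))"
    unfolding ts_eq using chord_length_append_le by simp
  also have "\<dots> \<le> variation f a b + variation f b c" using left right by (rule add_mono)
  finally show "ereal (chord_length f ts) \<le> variation f a b + variation f b c" .
qed

lemma variation_comp_mono_le:
  assumes "mono_on {a..b} g" "g ` {a..b} \<subseteq> {c..d}" "\<And>t. t \<in> {a..b} \<Longrightarrow> f t = f' (g t)"
  shows "variation f a b \<le> variation f' c d"
proof (rule variation_leI)
  fix ts :: "real list" assume ts: "sorted ts" "set ts \<subseteq> {a..b}"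
  have "chord_length f ts = chord_length (f' \<circ> g) ts"
    using ts(2) by (intro chord_length_cong) (auto simp: assms(3))
  then have "chord_length f ts = chord_length f' (map g ts)" by (simp add: chord_length_map)
  moreover have "sorted (map g ts)"
    unfolding sorted_map using ts(1)
  proof (rule sorted_wrt_mono_rel[rotated])
    show "\<And>x y. x \<in> set ts \<Longrightarrow> y \<in> set ts \<Longrightarrow> x \<le> y \<Longrightarrow> g x \<le> g y"
      using ts(2) by (auto intro: monotone_onD[OF assms(1)])
  qed
  moreover have "set (map g ts) \<subseteq> {c..d}" using ts(2) assms(2) by auto
  ultimately show "ereal (chord_length f ts) \<le> variation f' c d"
    by (simp add: chord_length_le_variation)
qed

lemma variation_comp_antimono_le:
  assumes "antimono_on {a..b} g" "g ` {a..b} \<subseteq> {c..d}"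
    "\<And>t. t \<in> {a..b} \<Longrightarrow> f t = f' (g t)"
  shows "variation f a b \<le> variation f' c d"
proof (rule variation_leI)
  fix ts :: "real list" assume ts: "sorted ts" "set ts \<subseteq> {a..b}"
  have "chord_length f ts = chord_length (f' \<circ> g) ts"
    using ts(2) by (intro chord_length_cong) (auto simp: assms(3))
  then have "chord_length f ts = chord_length f' (rev (map g ts))"
    by (simp add: chord_length_map chord_length_rev)
  moreover have "sorted (rev (map g ts))"
    unfolding sorted_wrt_rev sorted_wrt_map using ts(1)
  proof (rule sorted_wrt_mono_rel[rotated])
    show "\<And>x y. x \<in> set ts \<Longrightarrow> y \<in> set ts \<Longrightarrow> x \<le> y \<Longrightarrow> g y \<le> g x"
      using ts(2) by (auto intro: monotone_onD[OF assms(1)])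
  qed
  moreover have "set (rev (map g ts)) \<subseteq> {c..d}" using ts(2) assms(2) by auto
  ultimately show "ereal (chord_length f ts) \<le> variation f' c d"
    by (simp add: chord_length_le_variation)
qed


section \<open>A reparametrization of the square\<close>

definition unit_clamp :: "real \<Rightarrow> real" where
  "unit_clamp x = max 0 (min 1 x)"

definition peak_slope :: "real \<Rightarrow> real" where
  "peak_slope s = 1/2 + 5/2 * unit_clamp (5 * s)"

definition contract_time :: "real \<Rightarrow> real" where
  "contract_time s = unit_clamp (5 * s - 1)"

definition lift_time :: "real \<Rightarrow> real" where
  "lift_time s = unit_clamp (5 * s - 2)"

definition retreat_time :: "real \<Rightarrow> real" where
  "retreat_time s = unit_clamp (5 * s - 3)"

definition return_slope :: "real \<Rightarrow> real" where
  "return_slope s = 3/2 - unit_clamp (5 * s - 4)"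

text \<open>Precomposed with a contraction h of a loop \<gamma> = h(0, -), the slices
  t \<mapsto> h (square_reparam (s, t)) pass from \<gamma> on [0, 1/2] to \<gamma> on [1/2, 1] reversed in four
  stages: for s \<in> [0, 1/5] up \<gamma> to a turning point (rising with peak_slope) and back down;
  for s \<in> [1/5, 2/5] along h(\<sigma>, -) with \<sigma> = contract_time s, a pause, and back down \<gamma>;
  for s \<in> [2/5, 4/5] the first third is pushed (by lift_time, then retreat_time) into the
  sides base_point_sides of the square, where h is constant; for s \<in> [4/5, 1] the
  remaining descent is stretched to unit speed.\<close>

definition square_reparam :: "real \<times> real \<Rightarrow> real \<times> real" where
  "square_reparam = (\<lambda>(s, t).
     (contract_time s * (1 - retreat_time s) * unit_clamp (2 - 3 * t),
      min (max (peak_slope s * t) (lift_time s)) (min 1 (1/2 + return_slope s * (1 - t)))))"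

lemma unit_clamp_bounds: "0 \<le> unit_clamp x" "unit_clamp x \<le> 1"
  by (auto simp: unit_clamp_def)

lemma unit_clamp_eq_0: "x \<le> 0 \<Longrightarrow> unit_clamp x = 0"
  and unit_clamp_eq_1: "1 \<le> x \<Longrightarrow> unit_clamp x = 1"
  by (auto simp: unit_clamp_def)

lemma peak_slope_bounds: "1/2 \<le> peak_slope s" "peak_slope s \<le> 3"
  using unit_clamp_bounds[of "5 * s"] by (auto simp: peak_slope_def)

lemma return_slope_bounds: "1/2 \<le> return_slope s" "return_slope s \<le> 3/2"
  using unit_clamp_bounds[of "5 * s - 4"] by (auto simp: return_slope_def)

lemma continuous_on_square_reparam: "continuous_on UNIV square_reparam"
  unfolding square_reparam_def case_prod_unfold contract_time_def retreat_time_def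
    peak_slope_def lift_time_def return_slope_def unit_clamp_def
  by (intro continuous_intros)

lemma square_reparam_in_square:
  assumes "st \<in> {0..1} \<times> {0..1}"
  shows "square_reparam st \<in> {0..1} \<times> {0..1}"
proof -
  obtain s t where st: "st = (s, t)" "0 \<le> t" "t \<le> 1" using assms by auto
  have "0 \<le> contract_time s * (1 - retreat_time s) * unit_clamp (2 - 3 * t)"
    and "contract_time s * (1 - retreat_time s) * unit_clamp (2 - 3 * t) \<le> 1"
    using unit_clamp_bounds
    by (auto simp: contract_time_def retreat_time_def intro!: mult_le_one)
  moreover have "0 \<le> peak_slope s * t" "0 \<le> return_slope s * (1 - t)" "0 \<le> lift_time s"
    using peak_slope_bounds[of s] return_slope_bounds[of s] unit_clamp_bounds st
    by (auto simp: lift_time_def)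
  ultimately show ?thesis by (auto simp: square_reparam_def st)
qed

lemma square_reparam_left: "0 \<le> t \<Longrightarrow> t \<le> 1 \<Longrightarrow> square_reparam (0, t) = (0, t / 2)"
  by (auto simp: square_reparam_def contract_time_def retreat_time_def peak_slope_def
      lift_time_def return_slope_def unit_clamp_def min_def field_simps)

lemma square_reparam_right: "0 \<le> t \<Longrightarrow> t \<le> 1 \<Longrightarrow> square_reparam (1, t) = (0, 1 - t / 2)"
  by (auto simp: square_reparam_def contract_time_def retreat_time_def peak_slope_def
      lift_time_def return_slope_def unit_clamp_def min_def field_simps)

lemma square_reparam_top: "square_reparam (s, 1) = (0, 1/2)"
  using peak_slope_bounds[of s] unit_clamp_bounds[of "5 * s - 2"]
  by (auto simp: square_reparam_def unit_clamp_eq_0 lift_time_def)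

definition base_point_sides :: "(real \<times> real) set" where
  "base_point_sides = {0..1} \<times> {0, 1} \<union> {1} \<times> {0..1}"

lemma square_reparam_bottom: "square_reparam (s, 0) \<in> base_point_sides"
proof -
  have "square_reparam (s, 0) = (contract_time s * (1 - retreat_time s), lift_time s)"
    using return_slope_bounds[of s] unit_clamp_bounds[of "5 * s - 2"]
    by (simp add: square_reparam_def unit_clamp_eq_1 lift_time_def)
  moreover have "lift_time s = 0 \<or> contract_time s = 1 \<and> (retreat_time s = 0 \<or> lift_time s = 1)"
    by (auto simp: lift_time_def contract_time_def retreat_time_def unit_clamp_def)
  ultimately show ?thesis
    using unit_clamp_bounds[of "5 * s - 1"] unit_clamp_bounds[of "5 * s - 2"]
      unit_clamp_bounds[of "5 * s - 3"]
    by (auto simp: base_point_sides_def contract_time_def retreat_time_def lift_time_def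
        intro!: mult_le_one)
qed

lemma square_reparam_extend:
  assumes "s \<le> 1/5" "0 \<le> t"
  shows "square_reparam (s, t) = (0, min (peak_slope s * t) (min 1 (2 - 3/2 * t)))"
  using assms peak_slope_bounds[of s]
  by (auto simp: square_reparam_def contract_time_def retreat_time_def lift_time_def
      return_slope_def unit_clamp_eq_0 field_simps)

lemma square_reparam_contract:
  assumes "1/5 \<le> s" "s \<le> 2/5" "0 \<le> t" "t \<le> 1/3"
  shows "square_reparam (s, t) = (contract_time s, 3 * t)"
  using assms
  by (auto simp: square_reparam_def retreat_time_def lift_time_def peak_slope_def
      return_slope_def unit_clamp_eq_0 unit_clamp_eq_1 min_def max_def field_simps)

lemma base_point_sidesI:
  assumes "st \<in> {0..1} \<times> {0..1}" "fst st = 1 \<or> snd st = 1"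
  shows "st \<in> base_point_sides"
  using assms by (cases st) (auto simp: base_point_sides_def)

lemma square_reparam_slide:
  assumes "2/5 \<le> s" "s \<le> 4/5" "0 \<le> t" "t \<le> 1/3"
  shows "square_reparam (s, t) \<in> base_point_sides"
proof (rule base_point_sidesI)
  show "square_reparam (s, t) \<in> {0..1} \<times> {0..1}"
    using assms by (intro square_reparam_in_square) auto
  have "peak_slope s = 3" "return_slope s = 3/2" "contract_time s = 1"
    using assms by (simp_all add: peak_slope_def return_slope_def contract_time_def
        unit_clamp_eq_0 unit_clamp_eq_1)
  moreover have "retreat_time s = 0 \<or> lift_time s = 1"
    by (auto simp: retreat_time_def lift_time_def unit_clamp_def)
  ultimately show "fst (square_reparam (s, t)) = 1 \<or> snd (square_reparam (s, t)) = 1"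
    using assms by (auto simp: square_reparam_def unit_clamp_eq_1 min_def max_def field_simps)
qed

lemma square_reparam_pause:
  assumes "1/5 \<le> s" "s \<le> 4/5" "1/3 \<le> t" "t \<le> 2/3"
  shows "square_reparam (s, t) \<in> base_point_sides"
proof (rule base_point_sidesI)
  show "square_reparam (s, t) \<in> {0..1} \<times> {0..1}"
    using assms by (intro square_reparam_in_square) auto
  have "peak_slope s = 3" "return_slope s = 3/2" "lift_time s \<le> 1"
    using assms unit_clamp_bounds by (simp_all add: peak_slope_def return_slope_def
        lift_time_def unit_clamp_eq_0 unit_clamp_eq_1)
  then show "fst (square_reparam (s, t)) = 1 \<or> snd (square_reparam (s, t)) = 1"
    using assms by (auto simp: square_reparam_def min_def max_def field_simps)
qed

lemma square_reparam_return:
  assumes "1/5 \<le> s" "s \<le> 4/5" "2/3 \<le> t" "t \<le> 1"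
  shows "square_reparam (s, t) = (0, 2 - 3/2 * t)"
  using assms unit_clamp_bounds[of "5 * s - 2"]
  by (auto simp: square_reparam_def lift_time_def peak_slope_def return_slope_def
      unit_clamp_eq_0 unit_clamp_eq_1 min_def max_def field_simps)

lemma square_reparam_shrink:
  assumes "4/5 \<le> s" "0 \<le> t" "t \<le> 1"
  shows "square_reparam (s, t) = (0, min 1 (1/2 + return_slope s * (1 - t)))"
  using assms return_slope_bounds[of s]
  by (auto simp: square_reparam_def retreat_time_def lift_time_def peak_slope_def
      unit_clamp_eq_1 min_def max_def)


locale bounded_loop_contraction =
  fixes h :: "real \<times> real \<Rightarrow> 'a::metric_space" and p :: 'a and l L :: real
  assumes on_base_point_sides: "st \<in> base_point_sides \<Longrightarrow> h st = p"
    and loop_variation: "\<tau> \<in> {0..1} \<Longrightarrow> variation (\<lambda>t. h (\<tau>, t)) 0 1 \<le> ereal L"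
    and tail_variation: "variation (\<lambda>t. h (0, t)) (1/2) 1 \<le> ereal l"
begin

lemma loop_bound_nonneg: "0 \<le> L"
proof -
  have "0 \<le> variation (\<lambda>t. h (0, t)) 0 1" by (rule variation_nonneg)
  also have "\<dots> \<le> ereal L" by (rule loop_variation) simp
  finally show ?thesis by simp
qed

lemma loop_piece_variation:
  assumes "mono_on {a..b} g" "g ` {a..b} \<subseteq> {0..1}" "\<tau> \<in> {0..1}"
    and "\<And>t. t \<in> {a..b} \<Longrightarrow> square_reparam (s, t) = (\<tau>, g t)"
  shows "variation (\<lambda>t. h (square_reparam (s, t))) a b \<le> ereal L"
proof -
  have "variation (\<lambda>t. h (square_reparam (s, t))) a b \<le> variation (\<lambda>t. h (\<tau>, t)) 0 1"
    using assms(4) by (intro variation_comp_mono_le[OF assms(1,2)]) simp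
  then show ?thesis using loop_variation[OF assms(3)] by (rule order_trans)
qed

lemma tail_piece_variation:
  assumes "antimono_on {a..b} g" "g ` {a..b} \<subseteq> {1/2..1}"
    and "\<And>t. t \<in> {a..b} \<Longrightarrow> square_reparam (s, t) = (0, g t)"
  shows "variation (\<lambda>t. h (square_reparam (s, t))) a b \<le> ereal l"
proof -
  have "variation (\<lambda>t. h (square_reparam (s, t))) a b \<le> variation (\<lambda>t. h (0, t)) (1/2) 1"
    using assms(3) by (intro variation_comp_antimono_le[OF assms(1,2)]) simp
  then show ?thesis using tail_variation by (rule order_trans)
qed

lemma base_piece_variation:
  assumes "\<And>t. t \<in> {a..b} \<Longrightarrow> square_reparam (s, t) \<in> base_point_sides"
  shows "variation (\<lambda>t. h (square_reparam (s, t))) a b = 0"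
  using assms on_base_point_sides by (intro variation_const) auto

lemma slice_variation_extend:
  assumes "s \<le> 1/5"
  shows "variation (\<lambda>t. h (square_reparam (s, t))) 0 1 \<le> ereal (l + L)"
proof -
  let ?F = "\<lambda>t. h (square_reparam (s, t))"
  define k where "k = peak_slope s"
  define m where "m = 4 / (2 * k + 3)"
  have k: "1/2 \<le> k" "k \<le> 3" using peak_slope_bounds unfolding k_def by auto
  have m: "0 \<le> m" "m \<le> 1" using k unfolding m_def by (auto simp: field_simps)
  have turn: "k * t \<le> 2 - 3/2 * t \<longleftrightarrow> t \<le> m" "2 - 3/2 * t \<le> k * t \<longleftrightarrow> m \<le> t" for t
    using k unfolding m_def by (simp_all add: field_simps)
  have head: "variation ?F 0 m \<le> ereal L"
  proof (rule loop_piece_variation[where \<tau> = 0 and g = "\<lambda>t. min (k * t) 1"])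
    show "mono_on {0..m} (\<lambda>t. min (k * t) 1)"
      using k by (auto intro!: monotone_onI min.mono mult_left_mono)
    show "(\<lambda>t. min (k * t) 1) ` {0..m} \<subseteq> {0..1}" using k by auto
    show "square_reparam (s, t) = (0, min (k * t) 1)" if "t \<in> {0..m}" for t
      using that turn(1)[of t] square_reparam_extend[OF assms, of t] by (auto simp: k_def min_def)
  qed simp
  have tail: "variation ?F m 1 \<le> ereal l"
  proof (rule tail_piece_variation[where g = "\<lambda>t. min 1 (2 - 3/2 * t)"])
    show "antimono_on {m..1} (\<lambda>t. min 1 (2 - 3/2 * t))" by (auto intro!: monotone_onI)
    show "(\<lambda>t. min 1 (2 - 3/2 * t)) ` {m..1} \<subseteq> {1/2..1}" using m by auto
    show "square_reparam (s, t) = (0, min 1 (2 - 3/2 * t))" if "t \<in> {m..1}" for t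
      using that turn(2)[of t] m square_reparam_extend[OF assms, of t] by (auto simp: k_def min_def)
  qed
  have "variation ?F 0 1 \<le> variation ?F 0 m + variation ?F m 1"
    using m by (rule variation_split_le)
  also have "\<dots> \<le> ereal L + ereal l" using head tail by (rule add_mono)
  finally show ?thesis by (simp add: add.commute)
qed

lemma slice_variation_middle:
  assumes "1/5 \<le> s" "s \<le> 4/5"
  shows "variation (\<lambda>t. h (square_reparam (s, t))) 0 1 \<le> ereal (l + L)"
proof -
  let ?F = "\<lambda>t. h (square_reparam (s, t))"
  have first: "variation ?F 0 (1/3) \<le> ereal L"
  proof (cases "s \<le> 2/5")
    case True
    show ?thesis
    proof (rule loop_piece_variation[where \<tau> = "contract_time s" and g = "\<lambda>t. 3 * t"])
      show "contract_time s \<in> {0..1}" using unit_clamp_bounds by (simp add: contract_time_def)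
    qed (use True assms in \<open>auto intro!: monotone_onI square_reparam_contract\<close>)
  next
    case False
    then have "variation ?F 0 (1/3) = 0"
      using assms by (intro base_piece_variation square_reparam_slide) auto
    then show ?thesis using loop_bound_nonneg by simp
  qed
  have middle: "variation ?F (1/3) (2/3) = 0"
    using assms by (intro base_piece_variation square_reparam_pause) auto
  have last: "variation ?F (2/3) 1 \<le> ereal l"
  proof (rule tail_piece_variation[where g = "\<lambda>t. 2 - 3/2 * t"])
    show "square_reparam (s, t) = (0, 2 - 3/2 * t)" if "t \<in> {2/3..1}" for t
      using assms that by (intro square_reparam_return) auto
  qed (auto intro!: monotone_onI)
  have "variation ?F 0 1 \<le> variation ?F 0 (1/3) + variation ?F (1/3) 1"
    by (rule variation_split_le) auto
  also have "\<dots> \<le> variation ?F 0 (1/3) + (variation ?F (1/3) (2/3) + variation ?F (2/3) 1)"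
    by (intro add_left_mono variation_split_le) auto
  also have "\<dots> \<le> ereal L + (0 + ereal l)"
    using first middle last by (intro add_mono) auto
  finally show ?thesis by (simp add: add.commute)
qed

lemma slice_variation_shrink:
  assumes "4/5 \<le> s"
  shows "variation (\<lambda>t. h (square_reparam (s, t))) 0 1 \<le> ereal (l + L)"
proof -
  define d where "d = return_slope s"
  have d: "1/2 \<le> d" "d \<le> 3/2" using return_slope_bounds unfolding d_def by auto
  have "variation (\<lambda>t. h (square_reparam (s, t))) 0 1 \<le> ereal l"
  proof (rule tail_piece_variation[where g = "\<lambda>t. min 1 (1/2 + d * (1 - t))"])
    show "antimono_on {0..1} (\<lambda>t. min 1 (1/2 + d * (1 - t)))"
      using d by (auto intro!: monotone_onI min.mono mult_left_mono)
    show "(\<lambda>t. min 1 (1/2 + d * (1 - t))) ` {0..1} \<subseteq> {1/2..1}" using d by auto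
  qed (use assms in \<open>auto simp: d_def square_reparam_shrink\<close>)
  also have "\<dots> \<le> ereal (l + L)" using loop_bound_nonneg by simp
  finally show ?thesis .
qed

lemma slice_variation: "variation (\<lambda>t. h (square_reparam (s, t))) 0 1 \<le> ereal (l + L)"
proof -
  consider "s \<le> 1/5" | "1/5 \<le> s" "s \<le> 4/5" | "4/5 \<le> s" by linarith
  then show ?thesis
    using slice_variation_extend slice_variation_middle slice_variation_shrink by cases
qed

end

section \<open>Path homotopies from loop contractions\<close>

text \<open>Continuity is kept out of the next two notions, because the parametric version of the
  theorem requires it jointly in the parameter.\<close>

definition loop_contraction ::
    "(real \<times> real \<Rightarrow> 'a::metric_space) \<Rightarrow> (real \<Rightarrow> 'a) \<Rightarrow> 'a \<Rightarrow> real \<Rightarrow> bool" where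
  "loop_contraction h \<gamma> p L \<longleftrightarrow>
     (\<forall>t\<in>{0..1}. h (0, t) = \<gamma> t \<and> h (1, t) = p) \<and>
     (\<forall>\<tau>\<in>{0..1}. h (\<tau>, 0) = p \<and> h (\<tau>, 1) = p \<and> curve_length (\<lambda>t. h (\<tau>, t)) \<le> ereal L)"

definition length_bounded_homotopy ::
    "(real \<times> real \<Rightarrow> 'a::metric_space) \<Rightarrow> (real \<Rightarrow> 'a) \<Rightarrow> (real \<Rightarrow> 'a) \<Rightarrow> 'a \<Rightarrow> 'a \<Rightarrow> real \<Rightarrow> bool"
  where
  "length_bounded_homotopy k g1 g2 p q B \<longleftrightarrow>
     (\<forall>t\<in>{0..1}. k (0, t) = g1 t \<and> k (1, t) = g2 t) \<and>
     (\<forall>s\<in>{0..1}. k (s, 0) = p \<and> k (s, 1) = q \<and> curve_length (\<lambda>t. k (s, t)) \<le> ereal B)"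

lemma length_bounded_homotopy_mono:
  "length_bounded_homotopy k g1 g2 p q B \<Longrightarrow> B \<le> B' \<Longrightarrow> length_bounded_homotopy k g1 g2 p q B'"
  by (auto simp: length_bounded_homotopy_def intro: order_trans)

lemma curve_length_reversepath: "curve_length (reversepath g) = curve_length g"
proof -
  have le: "curve_length (reversepath f) \<le> curve_length f" for f :: "real \<Rightarrow> 'a"
    unfolding curve_length_eq_variation
    by (rule variation_comp_antimono_le[where g = "\<lambda>t. 1 - t"])
      (auto intro!: monotone_onI simp: reversepath_def)
  show ?thesis using le[of g] le[of "reversepath g"] by simp
qed

lemma joinpaths_reversepath_second_half:
  assumes "pathfinish g1 = pathfinish g2" "1/2 \<le> t"
  shows "(g1 +++ reversepath g2) t = g2 (2 - 2 * t)"
proof (cases "t = 1/2")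
  case True
  show ?thesis using assms(1) unfolding True by (simp add: joinpaths_def reversepath_def pathfinish_def)
next
  case False
  then show ?thesis using assms(2) by (simp add: joinpaths_def reversepath_def)
qed

lemma loop_contraction_bounds:
  assumes h: "loop_contraction h (g1 +++ reversepath g2) p L"
    and ends: "pathfinish g1 = pathfinish g2" and len: "curve_length g2 = ereal l"
  shows "bounded_loop_contraction h p l L"
proof
  show "h st = p" if "st \<in> base_point_sides" for st
    using h that by (auto simp: loop_contraction_def base_point_sides_def)
  show "variation (\<lambda>t. h (\<tau>, t)) 0 1 \<le> ereal L" if "\<tau> \<in> {0..1}" for \<tau>
    using h that by (simp add: loop_contraction_def curve_length_eq_variation)
  have "variation (\<lambda>t. h (0, t)) (1/2) 1 \<le> variation g2 0 1"
    using h ends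
    by (intro variation_comp_antimono_le[where g = "\<lambda>t. 2 - 2 * t"])
      (auto intro!: monotone_onI simp: loop_contraction_def joinpaths_reversepath_second_half)
  then show "variation (\<lambda>t. h (0, t)) (1/2) 1 \<le> ereal l"
    using len by (simp add: curve_length_eq_variation)
qed

lemma length_bounded_homotopy_square_reparam:
  assumes h: "loop_contraction h (g1 +++ reversepath g2) p L"
    and "pathfinish g1 = q" "pathfinish g2 = q" and "curve_length g2 = ereal l"
  shows "length_bounded_homotopy (h \<circ> square_reparam) g1 g2 p q (l + L)"
proof -
  interpret bounded_loop_contraction h p l L
    using assms by (intro loop_contraction_bounds) auto
  have "h (0, t / 2) = g1 t" "h (0, 1 - t / 2) = g2 t" if "t \<in> {0..1}" for t
    using h that assms(2,3)
    by (auto simp: loop_contraction_def joinpaths_reversepath_second_half)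
      (auto simp: joinpaths_def)
  moreover have "h (0, 1/2) = q"
    using h assms(2) by (auto simp: loop_contraction_def joinpaths_def pathfinish_def)
  ultimately show ?thesis
    using on_base_point_sides[OF square_reparam_bottom] slice_variation
    by (auto simp: length_bounded_homotopy_def curve_length_eq_variation
        square_reparam_left square_reparam_right square_reparam_top)
qed

definition mirror_reparam :: "real \<times> real \<Rightarrow> real \<times> real" where
  "mirror_reparam = (\<lambda>(\<tau>, u). (\<tau>, 1 - u)) \<circ> square_reparam \<circ> (\<lambda>(s, t). (1 - s, t))"

lemma loop_contraction_reverse:
  assumes "loop_contraction h (g1 +++ reversepath g2) p L" "pathfinish g1 = pathfinish g2"
  shows "loop_contraction (h \<circ> (\<lambda>(\<tau>, u). (\<tau>, 1 - u))) (g2 +++ reversepath g1) p L"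
proof -
  have "reversepath (g1 +++ reversepath g2) = g2 +++ reversepath g1"
    using assms(2) by (simp add: reversepath_joinpaths)
  then have "(g1 +++ reversepath g2) (1 - t) = (g2 +++ reversepath g1) t" for t
    by (metis reversepath_def)
  moreover have "(\<lambda>t. h (\<tau>, 1 - t)) = reversepath (\<lambda>t. h (\<tau>, t))" for \<tau>
    by (simp add: reversepath_def)
  ultimately show ?thesis
    using assms(1) by (auto simp: loop_contraction_def curve_length_reversepath)
qed

lemma length_bounded_homotopy_reverse:
  "length_bounded_homotopy k g2 g1 p q B \<Longrightarrow>
    length_bounded_homotopy (k \<circ> (\<lambda>(s, t). (1 - s, t))) g1 g2 p q B"
  by (auto simp: length_bounded_homotopy_def)

lemma length_bounded_homotopy_mirror_reparam:
  assumes "loop_contraction h (g1 +++ reversepath g2) p L"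
    and "pathfinish g1 = q" "pathfinish g2 = q" and "curve_length g1 = ereal l"
  shows "length_bounded_homotopy (h \<circ> mirror_reparam) g1 g2 p q (l + L)"
proof -
  have "loop_contraction (h \<circ> (\<lambda>(\<tau>, u). (\<tau>, 1 - u))) (g2 +++ reversepath g1) p L"
    using assms by (intro loop_contraction_reverse) auto
  then have "length_bounded_homotopy (h \<circ> (\<lambda>(\<tau>, u). (\<tau>, 1 - u)) \<circ> square_reparam) g2 g1 p q (l + L)"
    using assms by (intro length_bounded_homotopy_square_reparam) auto
  then show ?thesis
    unfolding mirror_reparam_def by (metis comp_assoc length_bounded_homotopy_reverse)
qed

lemma continuous_on_mirror_reparam: "continuous_on UNIV mirror_reparam"
  unfolding mirror_reparam_def case_prod_unfold
  by (intro continuous_on_compose continuous_intros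
      continuous_on_subset[OF continuous_on_square_reparam]) auto

lemma mirror_reparam_in_square:
  "st \<in> {0..1} \<times> {0..1} \<Longrightarrow> mirror_reparam st \<in> {0..1} \<times> {0..1}"
  using square_reparam_in_square[of "(1 - fst st, snd st)"]
  by (auto simp: mirror_reparam_def split: prod.splits)

lemma continuous_on_parametric_comp:
  assumes "continuous_on (X \<times> S) (\<lambda>(x, y). H x y)" "continuous_on S \<phi>" "\<phi> ` S \<subseteq> S"
  shows "continuous_on (X \<times> S) (\<lambda>(x, y). H x (\<phi> y))"
proof -
  have "continuous_on (X \<times> S) (\<lambda>z. (fst z, \<phi> (snd z)))"
    using assms(2) by (intro continuous_intros continuous_on_compose2[OF assms(2)]) auto
  moreover have "(\<lambda>z. (fst z, \<phi> (snd z))) ` (X \<times> S) \<subseteq> X \<times> S" using assms(3) by auto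
  ultimately have "continuous_on (X \<times> S) (\<lambda>z. (\<lambda>(x, y). H x y) (fst z, \<phi> (snd z)))"
    by (rule continuous_on_compose2[OF assms(1)])
  then show ?thesis by (simp add: case_prod_unfold)
qed

lemma path_homotopy_of_loop_contraction:
  fixes h :: "real \<times> real \<Rightarrow> 'a::metric_space"
  assumes cont: "continuous_on ({0..1} \<times> {0..1}) h"
    and contr: "loop_contraction h (g1 +++ reversepath g2) p L"
    and ends: "pathfinish g1 = q" "pathfinish g2 = q"
    and len: "curve_length g1 = ereal l1" "curve_length g2 = ereal l2"
  shows "\<exists>k. continuous_on ({0..1} \<times> {0..1}) k \<and>
           length_bounded_homotopy k g1 g2 p q (min l1 l2 + L)"
proof -
  obtain \<phi> where \<phi>: "continuous_on UNIV \<phi>" "\<phi> ` ({0..1} \<times> {0..1}) \<subseteq> {0..1} \<times> {0..1}"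
    and hom: "length_bounded_homotopy (h \<circ> \<phi>) g1 g2 p q (min l1 l2 + L)"
  proof (cases "l2 \<le> l1")
    case True
    show ?thesis
    proof (rule that[OF continuous_on_square_reparam])
      show "square_reparam ` ({0..1} \<times> {0..1}) \<subseteq> {0..1} \<times> {0..1}"
        using square_reparam_in_square by blast
      show "length_bounded_homotopy (h \<circ> square_reparam) g1 g2 p q (min l1 l2 + L)"
        using length_bounded_homotopy_square_reparam[OF contr ends len(2)] True
        by (simp add: min_absorb2)
    qed
  next
    case False
    show ?thesis
    proof (rule that[OF continuous_on_mirror_reparam])
      show "mirror_reparam ` ({0..1} \<times> {0..1}) \<subseteq> {0..1} \<times> {0..1}"
        using mirror_reparam_in_square by blast
      show "length_bounded_homotopy (h \<circ> mirror_reparam) g1 g2 p q (min l1 l2 + L)"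
        using length_bounded_homotopy_mirror_reparam[OF contr ends len(1)] False
        by (simp add: min_absorb1)
    qed
  qed
  have "continuous_on ({0..1} \<times> {0..1}) (h \<circ> \<phi>)"
    using \<phi> by (intro continuous_on_compose continuous_on_subset[OF cont]) (auto intro: continuous_on_subset)
  then show ?thesis using hom by blast
qed

lemma parametric_path_homotopy_of_loop_contraction:
  fixes H :: "'b::topological_space \<Rightarrow> real \<times> real \<Rightarrow> 'a::metric_space"
  assumes cont: "continuous_on (X \<times> ({0..1} \<times> {0..1})) (\<lambda>(x, st). H x st)"
    and contr: "\<And>x. x \<in> X \<Longrightarrow> loop_contraction (H x) (g1 x +++ reversepath (g2 x)) (p x) (L x)"
    and ends: "\<And>x. x \<in> X \<Longrightarrow> pathfinish (g1 x) = q x" "\<And>x. x \<in> X \<Longrightarrow> pathfinish (g2 x) = q x"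
    and len: "\<And>x. x \<in> X \<Longrightarrow> curve_length (g1 x) = ereal (l1 x)"
      "\<And>x. x \<in> X \<Longrightarrow> curve_length (g2 x) = ereal (l2 x)"
    and bound: "(\<forall>x\<in>X. l1 x + L x \<le> B) \<or> (\<forall>x\<in>X. l2 x + L x \<le> B)"
  shows "\<exists>K. continuous_on (X \<times> ({0..1} \<times> {0..1})) (\<lambda>(x, st). K x st) \<and>
           (\<forall>x\<in>X. length_bounded_homotopy (K x) (g1 x) (g2 x) (p x) (q x) B)"
proof -
  obtain \<phi> where \<phi>: "continuous_on UNIV \<phi>" "\<phi> ` ({0..1} \<times> {0..1}) \<subseteq> {0..1} \<times> {0..1}"
    and hom: "\<And>x. x \<in> X \<Longrightarrow> length_bounded_homotopy (H x \<circ> \<phi>) (g1 x) (g2 x) (p x) (q x) B"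
  proof (cases "\<forall>x\<in>X. l2 x + L x \<le> B")
    case True
    show ?thesis
    proof (rule that[OF continuous_on_square_reparam])
      show "square_reparam ` ({0..1} \<times> {0..1}) \<subseteq> {0..1} \<times> {0..1}"
        using square_reparam_in_square by blast
      show "length_bounded_homotopy (H x \<circ> square_reparam) (g1 x) (g2 x) (p x) (q x) B"
        if "x \<in> X" for x
        using length_bounded_homotopy_square_reparam[OF contr ends len(2), OF that that that that]
          True that by (blast intro: length_bounded_homotopy_mono)
    qed
  next
    case False
    then have l1: "\<forall>x\<in>X. l1 x + L x \<le> B" using bound by blast
    show ?thesis
    proof (rule that[OF continuous_on_mirror_reparam])
      show "mirror_reparam ` ({0..1} \<times> {0..1}) \<subseteq> {0..1} \<times> {0..1}"
        using mirror_reparam_in_square by blast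
      show "length_bounded_homotopy (H x \<circ> mirror_reparam) (g1 x) (g2 x) (p x) (q x) B"
        if "x \<in> X" for x
        using length_bounded_homotopy_mirror_reparam[OF contr ends len(1), OF that that that that]
          l1 that by (blast intro: length_bounded_homotopy_mono)
    qed
  qed
  have "continuous_on (X \<times> ({0..1} \<times> {0..1})) (\<lambda>(x, st). (H x \<circ> \<phi>) st)"
    using continuous_on_parametric_comp[OF cont continuous_on_subset[OF \<phi>(1)] \<phi>(2)] by simp
  then show ?thesis using hom by blast
qed

theorem lemma4p3:
  shows
  "(\<forall>(e1::real \<Rightarrow> 'a::metric_space) e2 p1 p2 (l1::real) l2 l3 (H::real \<times> real \<Rightarrow> 'a).
      path e1 \<and> path e2 \<and> pathstart e1 = p1 \<and> pathfinish e1 = p2 \<and>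
      pathstart e2 = p1 \<and> pathfinish e2 = p2 \<and>
      curve_length e1 = ereal l1 \<and> curve_length e2 = ereal l2 \<and>
      continuous_on ({0..1} \<times> {0..1}) H \<and>
      (\<forall>t\<in>{0..1}. H (0, t) = (e1 +++ reversepath e2) t \<and> H (1, t) = p1) \<and>
      (\<forall>\<tau>\<in>{0..1}. H (\<tau>, 0) = p1 \<and> H (\<tau>, 1) = p1 \<and>
                    curve_length (\<lambda>t. H (\<tau>, t)) \<le> ereal l3)
    \<longrightarrow> (\<exists>K::real \<times> real \<Rightarrow> 'a. continuous_on ({0..1} \<times> {0..1}) K \<and>
          (\<forall>t\<in>{0..1}. K (0, t) = e1 t \<and> K (1, t) = e2 t) \<and>
          (\<forall>s\<in>{0..1}. K (s, 0) = p1 \<and> K (s, 1) = p2 \<and>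
                       curve_length (\<lambda>t. K (s, t)) \<le> ereal (min l1 l2 + l3))))
   \<and>
   (\<forall>(X::'b::topological_space set) (e1::'b \<Rightarrow> real \<Rightarrow> 'a) e2 p1 p2
       (l1::'b \<Rightarrow> real) l2 l3 (H::'b \<Rightarrow> real \<times> real \<Rightarrow> 'a) (B::real).
      continuous_on (X \<times> {0..1}) (\<lambda>(x, t). e1 x t) \<and>
      continuous_on (X \<times> {0..1}) (\<lambda>(x, t). e2 x t) \<and>
      (\<forall>x\<in>X. pathstart (e1 x) = p1 x \<and> pathfinish (e1 x) = p2 x \<and>
              pathstart (e2 x) = p1 x \<and> pathfinish (e2 x) = p2 x \<and>
              curve_length (e1 x) = ereal (l1 x) \<and> curve_length (e2 x) = ereal (l2 x)) \<and>
      continuous_on (X \<times> ({0..1} \<times> {0..1})) (\<lambda>(x, st). H x st) \<and>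
      (\<forall>x\<in>X. (\<forall>t\<in>{0..1}. H x (0, t) = (e1 x +++ reversepath (e2 x)) t \<and> H x (1, t) = p1 x) \<and>
              (\<forall>\<tau>\<in>{0..1}. H x (\<tau>, 0) = p1 x \<and> H x (\<tau>, 1) = p1 x \<and>
                            curve_length (\<lambda>t. H x (\<tau>, t)) \<le> ereal (l3 x))) \<and>
      ((\<forall>x\<in>X. l1 x + l3 x \<le> B) \<or> (\<forall>x\<in>X. l2 x + l3 x \<le> B))
    \<longrightarrow> (\<exists>K::'b \<Rightarrow> real \<times> real \<Rightarrow> 'a.
          continuous_on (X \<times> ({0..1} \<times> {0..1})) (\<lambda>(x, st). K x st) \<and>
          (\<forall>x\<in>X. (\<forall>t\<in>{0..1}. K x (0, t) = e1 x t \<and> K x (1, t) = e2 x t) \<and>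
                  (\<forall>s\<in>{0..1}. K x (s, 0) = p1 x \<and> K x (s, 1) = p2 x \<and>
                               curve_length (\<lambda>t. K x (s, t)) \<le> ereal B))))"
  by (intro conjI allI impI; elim conjE)
    (blast intro: path_homotopy_of_loop_contraction[unfolded loop_contraction_def length_bounded_homotopy_def]
      parametric_path_homotopy_of_loop_contraction[unfolded loop_contraction_def length_bounded_homotopy_def])+

end
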